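(* Let $\varepsilon\in\{-1,1\}$, $\nu>0$ and let $l$ be a non-negative integer. Then there is $C>0$ such that $$\|\partial_x^l K(\cdot,\cdot,t)\|_{L^\infty(\mathbb{R}^2)}\le C t^{-\frac54-\frac l2},\qquad t>0 .$$
   Context: $K(x,y,t):=t^{-5/4}K_*(xt^{-1/2},yt^{-3/4})$ for $(x,y)\in\mathbb{R}^2$, $t>0$, where $$K_*(x,y):=\frac{1}{4\pi^{3/2}\nu^{3/4}}\int_0^\infty r^{-1/4}e^{-r}\cos\Big(x\sqrt{\tfrac{r}{\nu}}+\frac{y^2}{4\varepsilon}\sqrt{\tfrac{r}{\nu}}-\frac{\pi}{4}\varepsilon\Big)\,dr .$$ *)

theory Defs
  imports "HOL-Analysis.Analysis"
begin

definition Kstar :: "real \<Rightarrow> real \<Rightarrow> real \<Rightarrow> real \<Rightarrow> real" where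
  "Kstar eps nu x y =
     1 / (4 * pi powr (3/2) * nu powr (3/4)) *
     (LINT r:{0<..}|lborel.
        r powr (-1/4) * exp (- r) *
        cos (x * sqrt (r / nu) + y\<^sup>2 / (4 * eps) * sqrt (r / nu) - pi / 4 * eps))"

definition Kker :: "real \<Rightarrow> real \<Rightarrow> real \<Rightarrow> real \<Rightarrow> real \<Rightarrow> real" where
  "Kker eps nu x y t = t powr (-5/4) * Kstar eps nu (x * t powr (-1/2)) (y * t powr (-3/4))"

end

theory Submission
  imports Defs
begin

text \<open>
  Up to a constant, K_*(x, y) = H(x + y^2/(4 eps)) with
  H(z) = int_0^oo r^(-1/4) e^(-r) cos(z sqrt(r/nu) + phi) dr, so by the parabolic scaling
  d_x^l K(x, y, t) = c t^(-5/4 - l/2) H^(l)(...). Differentiating under the integral sign,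
  H^(l) is an integral of the same form with the extra factor (r/nu)^(l/2) and the phase
  shifted by l pi/2; hence it is bounded uniformly in z by the convergent Gamma integral
  nu^(-l/2) int_0^oo r^(l/2 - 1/4) e^(-r) dr.
\<close>

lemma has_real_derivative_integral_dominated:
  fixes f f' :: "real \<Rightarrow> 'a \<Rightarrow> real"
  assumes integrable: "\<And>z. integrable M (f z)"
    and measurable_deriv: "\<And>z. f' z \<in> borel_measurable M"
    and integrable_bound: "integrable M g"
    and deriv: "\<And>z x. x \<in> space M \<Longrightarrow> ((\<lambda>z. f z x) has_real_derivative f' z x) (at z)"
    and bound: "\<And>z x. x \<in> space M \<Longrightarrow> \<bar>f' z x\<bar> \<le> g x"
  shows "((\<lambda>z. integral\<^sup>L M (f z)) has_real_derivative integral\<^sup>L M (f' z\<^sub>0)) (at z\<^sub>0)"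
proof -
  let ?q = "\<lambda>h x. (f (z\<^sub>0 + h) x - f z\<^sub>0 x) / h"
  have "((\<lambda>h. integral\<^sup>L M (?q h)) \<longlongrightarrow> integral\<^sup>L M (f' z\<^sub>0)) (at 0)"
  proof (subst tendsto_at_iff_sequentially, intro allI impI)
    fix X :: "nat \<Rightarrow> real"
    assume X: "\<forall>i. X i \<in> UNIV - {0}" "X \<longlonglongrightarrow> 0"
    have "(\<lambda>i. integral\<^sup>L M (?q (X i))) \<longlonglongrightarrow> integral\<^sup>L M (f' z\<^sub>0)"
    proof (rule integral_dominated_convergence[where w = g])
      show "?q (X i) \<in> borel_measurable M" for i
        using integrable by measurable
      show "AE x in M. (\<lambda>i. ?q (X i) x) \<longlonglongrightarrow> f' z\<^sub>0 x"
      proof (rule AE_I2)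
        fix x assume "x \<in> space M"
        then have "((\<lambda>h. ?q h x) \<longlongrightarrow> f' z\<^sub>0 x) (at 0)"
          using deriv by (simp add: DERIV_def)
        then show "(\<lambda>i. ?q (X i) x) \<longlonglongrightarrow> f' z\<^sub>0 x"
          using X by (auto simp: tendsto_at_iff_sequentially o_def)
      qed
      show "AE x in M. norm (?q (X i) x) \<le> g x" for i
      proof (rule AE_I2)
        fix x assume x: "x \<in> space M"
        have "norm (f (z\<^sub>0 + X i) x - f z\<^sub>0 x) \<le> g x * norm (z\<^sub>0 + X i - z\<^sub>0)"
          by (rule field_differentiable_bound[where S = UNIV and f = "\<lambda>z. f z x" and f' = "\<lambda>z. f' z x"])
             (use deriv[OF x] bound[OF x] in auto)
        then show "norm (?q (X i) x) \<le> g x"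
          using X by (simp add: divide_le_eq)
      qed
    qed (use measurable_deriv integrable_bound in auto)
    then show "((\<lambda>h. integral\<^sup>L M (?q h)) \<circ> X) \<longlonglongrightarrow> integral\<^sup>L M (f' z\<^sub>0)"
      by (simp add: o_def)
  qed
  then show ?thesis
    by (simp add: DERIV_def integrable)
qed

lemma set_integrable_powr_exp:
  fixes a :: real
  assumes "a > -1"
  shows "set_integrable lborel {0<..} (\<lambda>r. r powr a * exp (- r))"
proof -
  have eq: "indicator {0<..} r *\<^sub>R (r powr a * exp (- r)) = indicator {0..} r * r powr (a + 1 - 1) / exp r"
    for r :: real
    by (cases "r = 0") (auto simp: indicator_def exp_minus field_simps)
  have "integrable lborel (\<lambda>r. indicator {0..} r * r powr (a + 1 - 1) / exp r)"
  proof (rule integrableI_nonneg)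
    have "ennreal (Gamma (a + 1)) = (\<integral>\<^sup>+ r. ennreal (indicator {0..} r * r powr (a + 1 - 1) / exp r) \<partial>lborel)"
      using assms by (intro Gamma_conv_nn_integral_real) simp
    then show "(\<integral>\<^sup>+ r. ennreal (indicator {0..} r * r powr (a + 1 - 1) / exp r) \<partial>lborel) < \<infinity>"
      by (metis ennreal_less_top infinity_ennreal_def)
  qed (auto simp: indicator_def)
  then show ?thesis
    unfolding set_integrable_def eq .
qed

definition osc_integrand :: "real \<Rightarrow> real \<Rightarrow> real \<Rightarrow> nat \<Rightarrow> real \<Rightarrow> real \<Rightarrow> real" where
  "osc_integrand a nu phi k z r =
     r powr a * exp (- r) * sqrt (r / nu) ^ k * cos (z * sqrt (r / nu) + phi + real k * pi / 2)"

definition osc_integral :: "real \<Rightarrow> real \<Rightarrow> real \<Rightarrow> nat \<Rightarrow> real \<Rightarrow> real" where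
  "osc_integral a nu phi k z = (LINT r:{0<..}|lborel. osc_integrand a nu phi k z r)"

lemma set_integrable_powr_exp_sqrt_power:
  fixes a nu :: real
  assumes "a > -1" "nu > 0"
  shows "set_integrable lborel {0<..} (\<lambda>r. r powr a * exp (- r) * sqrt (r / nu) ^ k)"
proof -
  have "set_integrable lborel {0<..} (\<lambda>r. nu powr (- real k / 2) * (r powr (a + real k / 2) * exp (- r)))"
    using assms by (intro set_integrable_mult_right set_integrable_powr_exp) auto
  moreover have "nu powr (- real k / 2) * (r powr (a + real k / 2) * exp (- r)) = r powr a * exp (- r) * sqrt (r / nu) ^ k"
    if "r \<in> {0<..}" for r
  proof -
    have "sqrt (r / nu) ^ k = (r / nu) powr (real k / 2)"
      using that assms by (simp add: powr_half_sqrt [symmetric] powr_power)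
    also have "\<dots> = r powr (real k / 2) * nu powr (- real k / 2)"
      using that assms by (simp add: powr_divide powr_minus_divide)
    finally show ?thesis
      using that by (simp add: powr_add)
  qed
  ultimately show ?thesis
    by (rule set_integrable_cong[OF refl refl, THEN iffD1, rotated])
qed

lemma abs_osc_integrand_le:
  assumes "nu > 0" "r > 0"
  shows "\<bar>osc_integrand a nu phi k z r\<bar> \<le> r powr a * exp (- r) * sqrt (r / nu) ^ k"
  using assms by (simp add: osc_integrand_def abs_mult mult_left_le)

lemma set_integrable_osc_integrand:
  assumes "a > -1" "nu > 0"
  shows "set_integrable lborel {0<..} (osc_integrand a nu phi k z)"
proof (rule set_integrable_bound[OF set_integrable_powr_exp_sqrt_power[OF assms]])
  show "set_borel_measurable lborel {0<..} (osc_integrand a nu phi k z)"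
    unfolding set_borel_measurable_def osc_integrand_def by measurable
  show "AE r in lborel. r \<in> {0<..} \<longrightarrow>
          norm (osc_integrand a nu phi k z r) \<le> norm (r powr a * exp (- r) * sqrt (r / nu) ^ k)"
    by (intro AE_I2 impI) (auto intro: order_trans[OF abs_osc_integrand_le[OF assms(2)]])
qed

lemma osc_integrand_has_real_derivative:
  "((\<lambda>z. osc_integrand a nu phi k z r) has_real_derivative osc_integrand a nu phi (Suc k) z r) (at z)"
proof -
  have "((\<lambda>z. osc_integrand a nu phi k z r) has_real_derivative
      r powr a * exp (- r) * sqrt (r / nu) ^ k * (- sin (z * sqrt (r / nu) + phi + real k * pi / 2) * sqrt (r / nu))) (at z)"
    unfolding osc_integrand_def by (auto intro!: derivative_eq_intros)
  also have "r powr a * exp (- r) * sqrt (r / nu) ^ k * (- sin (z * sqrt (r / nu) + phi + real k * pi / 2) * sqrt (r / nu))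
      = osc_integrand a nu phi (Suc k) z r"
    unfolding osc_integrand_def minus_sin_cos_eq by (simp add: algebra_simps add_divide_distrib)
  finally show ?thesis .
qed

lemma osc_integral_has_real_derivative:
  assumes "a > -1" "nu > 0"
  shows "(osc_integral a nu phi k has_real_derivative osc_integral a nu phi (Suc k) z) (at z)"
  unfolding osc_integral_def set_lebesgue_integral_def
proof (rule has_real_derivative_integral_dominated)
  show "integrable lborel (\<lambda>r. indicator {0<..} r *\<^sub>R osc_integrand a nu phi k z r)" for z
    using set_integrable_osc_integrand[OF assms] unfolding set_integrable_def .
  show "(\<lambda>r. indicator {0<..} r *\<^sub>R osc_integrand a nu phi (Suc k) z r) \<in> borel_measurable lborel" for z
    unfolding osc_integrand_def by measurable
  show "integrable lborel (\<lambda>r. indicator {0<..} r *\<^sub>R (r powr a * exp (- r) * sqrt (r / nu) ^ Suc k))"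
    using set_integrable_powr_exp_sqrt_power[OF assms] unfolding set_integrable_def .
  show "((\<lambda>z. indicator {0<..} r *\<^sub>R osc_integrand a nu phi k z r) has_real_derivative
          indicator {0<..} r *\<^sub>R osc_integrand a nu phi (Suc k) z r) (at z)" for z r
    unfolding real_scaleR_def by (intro DERIV_cmult osc_integrand_has_real_derivative)
  show "\<bar>indicator {0<..} r *\<^sub>R osc_integrand a nu phi (Suc k) z r\<bar>
          \<le> indicator {0<..} r *\<^sub>R (r powr a * exp (- r) * sqrt (r / nu) ^ Suc k)" for z r
    using abs_osc_integrand_le[OF assms(2), of r a phi "Suc k" z] by (simp add: indicator_def)
qed

lemma abs_osc_integral_le:
  assumes "a > -1" "nu > 0"
  shows "\<bar>osc_integral a nu phi k z\<bar> \<le> (LINT r:{0<..}|lborel. r powr a * exp (- r) * sqrt (r / nu) ^ k)"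
  unfolding osc_integral_def set_lebesgue_integral_def real_norm_def[symmetric]
proof (rule Bochner_Integration.integral_norm_bound_integral)
  show "integrable lborel (\<lambda>r. indicator {0<..} r *\<^sub>R osc_integrand a nu phi k z r)"
    using set_integrable_osc_integrand[OF assms] unfolding set_integrable_def .
  show "integrable lborel (\<lambda>r. indicator {0<..} r *\<^sub>R (r powr a * exp (- r) * sqrt (r / nu) ^ k))"
    using set_integrable_powr_exp_sqrt_power[OF assms] unfolding set_integrable_def .
  show "norm (indicator {0<..} r *\<^sub>R osc_integrand a nu phi k z r)
          \<le> indicator {0<..} r *\<^sub>R (r powr a * exp (- r) * sqrt (r / nu) ^ k)" for r
    using abs_osc_integrand_le[OF assms(2), of r a phi k z] by (simp add: indicator_def)
qed

lemma funpow_deriv_affine: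
  fixes F :: "nat \<Rightarrow> real \<Rightarrow> real"
  assumes "\<And>k z. (F k has_real_derivative F (Suc k) z) (at z)"
  shows "(deriv ^^ l) (\<lambda>x. c * F 0 (x * s + w)) = (\<lambda>x. c * s ^ l * F l (x * s + w))"
proof (induction l)
  case 0
  then show ?case by simp
next
  case (Suc l)
  have step: "((\<lambda>x. c * s ^ l * F l (x * s + w)) has_real_derivative c * s ^ Suc l * F (Suc l) (x * s + w)) (at x)"
    for x
  proof -
    have "((\<lambda>x. F l (x * s + w)) has_real_derivative F (Suc l) (x * s + w) * s) (at x)"
      by (rule DERIV_chain2[OF assms]) (auto intro!: derivative_eq_intros)
    from DERIV_cmult[OF this, of "c * s ^ l"] show ?thesis
      by (simp add: algebra_simps)
  qed
  show ?case
    unfolding funpow.simps comp_apply Suc.IH using step by (intro ext DERIV_imp_deriv)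
qed

lemma Kstar_eq_osc_integral:
  "Kstar eps nu x y =
     1 / (4 * pi powr (3/2) * nu powr (3/4)) * osc_integral (-1/4) nu (- pi / 4 * eps) 0 (x + y\<^sup>2 / (4 * eps))"
proof -
  have "(\<lambda>r. r powr (-1/4) * exp (- r) * cos (x * sqrt (r / nu) + y\<^sup>2 / (4 * eps) * sqrt (r / nu) - pi / 4 * eps))
      = osc_integrand (-1/4) nu (- pi / 4 * eps) 0 (x + y\<^sup>2 / (4 * eps))"
    unfolding osc_integrand_def by (simp add: algebra_simps)
  then show ?thesis
    unfolding Kstar_def osc_integral_def by simp
qed

theorem proposition2p3:
  fixes eps nu :: real and l :: nat
  assumes "eps \<in> {-1, 1}" and "nu > 0"
  shows "\<exists>C>0. \<forall>t>0. \<forall>x y.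
           \<bar>(deriv ^^ l) (\<lambda>x'. Kker eps nu x' y t) x\<bar> \<le> C * t powr (-5/4 - real l / 2)"
proof -
  \<comment> \<open>The bound is uniform in the phase \<open>-\<pi>\<epsilon>/4\<close>.\<close>
  define c where "c = 1 / (4 * pi powr (3/2) * nu powr (3/4))"
  define phi where "phi = - pi / 4 * eps"
  define B where "B = (LINT r:{0<..}|lborel. r powr (-1/4) * exp (- r) * sqrt (r / nu) ^ l)"
  have osc_bound: "\<bar>osc_integral (-1/4) nu phi l z\<bar> \<le> B" for z
    unfolding B_def using abs_osc_integral_le[OF _ assms(2)] by simp
  have "\<bar>(deriv ^^ l) (\<lambda>x'. Kker eps nu x' y t) x\<bar> \<le> (\<bar>c\<bar> * B + 1) * t powr (-5/4 - real l / 2)"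
    if "t > 0" for t x y
  proof -
    have "(\<lambda>x'. Kker eps nu x' y t) =
        (\<lambda>x'. t powr (-5/4) * c * osc_integral (-1/4) nu phi 0 (x' * t powr (-1/2) + (y * t powr (-3/4))\<^sup>2 / (4 * eps)))"
      unfolding Kker_def Kstar_eq_osc_integral c_def phi_def by (simp add: mult.assoc)
    moreover have "t powr (-5/4) * (t powr (-1/2)) ^ l = t powr (-5/4 - real l / 2)"
      using that by (simp add: powr_power powr_add [symmetric])
    ultimately have deriv_eq: "(deriv ^^ l) (\<lambda>x'. Kker eps nu x' y t) x =
        c * t powr (-5/4 - real l / 2) * osc_integral (-1/4) nu phi l (x * t powr (-1/2) + (y * t powr (-3/4))\<^sup>2 / (4 * eps))"
      using osc_integral_has_real_derivative[OF _ assms(2)] by (simp add: funpow_deriv_affine)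
    have "\<bar>(deriv ^^ l) (\<lambda>x'. Kker eps nu x' y t) x\<bar> \<le> \<bar>c\<bar> * t powr (-5/4 - real l / 2) * B"
      unfolding deriv_eq abs_mult abs_of_nonneg[OF powr_ge_zero] by (intro mult_left_mono osc_bound) simp
    also have "\<dots> \<le> (\<bar>c\<bar> * B + 1) * t powr (-5/4 - real l / 2)"
      by (simp add: algebra_simps)
    finally show ?thesis .
  qed
  moreover have "\<bar>c\<bar> * B + 1 > 0"
    using osc_bound[of 0] by (simp add: add_nonneg_pos)
  ultimately show ?thesis
    by blast
qed

end
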